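(* Let $U$ be a regular molecule. Then (1) if $U$ is acyclic, it is dimension-wise acyclic; (2) if $U$ is dimension-wise acyclic, it is frame-acyclic.
   Context: All posets are finite; $y$ covers $x$ if $x<y$ with nothing strictly between. A finite poset is graded if for each $x$ all maximal covering chains descending from $x$ have the same length $\dim x$; $U_n$ denotes elements of dimension $n$. An oriented graded poset is a finite graded poset with a label $\pm$ on each covering pair; $\Delta^\alpha x$ ($\nabla^\alpha x$) is the set of elements covered by (covering) $x$ with label $\alpha$. For closed (downward closed) $U$, with $\mathrm{cl}$ downward closure, $\max U$ maximal elements, $\dim U$ maximal dimension ($-1$ if empty): $\Delta^\alpha_nU=\{x\in U_n:\nabla^{-\alpha}x\cap U=\emptyset\}$, $\partial^\alpha_nU=\mathrm{cl}(\Delta^\alpha_nU)\cup\bigcup_{j<n}\mathrm{cl}((\max U)_j)$ ($\emptyset$ for $n<0$), $\partial_nU=\partial^-_nU\cup\partial^+_nU$, subscript omitted for $n=\dim U-1$; $\Delta^\alpha_kx:=\Delta^\alpha_k\mathrm{cl}\{x\}$. Maps are functions with $f(\partial^\alpha_n\mathrm{cl}\{x\})=\partial^\alpha_n\mathrm{cl}\{f(x)\}$; inclusions are injective maps. $U\#_kV$ is the pushout of $U\hookleftarrow\partial^+_kU\cong\partial^-_kV\hookrightarrow V$; for $U,V$ of equal dimension $n$ with $\partial U\cong\partial V$ compatibly with $\partial^\pm$, $U\Rightarrow V$ is that pushout with a new element $\top$ of dimension $n+1$, $\Delta^-\top=U_n$, $\Delta^+\top=V_n$. $U$ is round if $\partial^-_nU\cap\partial^+_nU=\partial_{n-1}U$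 for all $n<\dim U$. Regular molecules: smallest isomorphism-closed class containing the point, closed under $U\#_kV$ ($k<\min(\dim U,\dim V)$) and $U\Rightarrow V$ for round regular molecules of equal dimension. Submolecule inclusions: smallest class of inclusions of regular molecules containing isomorphisms and $U\hookrightarrow U\#_kV\hookleftarrow V$, closed under composition; $V\sqsubseteq U$ if $V$ is closed and its inclusion is a submolecule inclusion. The oriented Hasse diagram of $U$ has vertex set $U$ and an edge from $y$ to $x$ iff $y\in\Delta^-x$ or $x\in\Delta^+y$; $U$ is acyclic if this graph is acyclic. $\mathcal F_kU$ ($k$-flow graph): vertices $\bigcup_{i>k}U_i$, edge $x\to y$ iff $\Delta^+_kx\cap\Delta^-_ky\ne\emptyset$; $U$ is dimension-wise acyclic if $\mathcal F_kU$ is acyclic for all $k\in\mathbb N$. $\mathcal M_kU$: induced subgraph of $\mathcal F_kU$ on $\bigcup_{i>k}(\max U)_i$. $\mathrm{frdim}\,U$ is the dimension of $\bigcup\{\mathrm{cl}\{x\}\cap\mathrm{cl}\{y\}:x\ne y\in\max U\}$. $U$ is frame-acyclic if for all $V\sqsubseteq U$, $\mathcal M_{\mathrm{frdim}V}V$ is acyclic. *)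

theory Defs
  imports Main
begin

text \<open>An oriented graded poset over element type 'a: a carrier set, a partial order
  (as a set of pairs x \<le> y), and an orientation label on covering pairs:
  og_pos P x y = True means the covering pair (y covers x) is labelled +, False means -.
  The label is only meaningful on covering pairs.\<close>

record 'a ogp =
  og_elts :: "'a set"
  og_ord  :: "('a \<times> 'a) set"
  og_pos  :: "'a \<Rightarrow> 'a \<Rightarrow> bool"

definition og_lt :: "'a ogp \<Rightarrow> 'a \<Rightarrow> 'a \<Rightarrow> bool" where
  "og_lt P x y \<longleftrightarrow> (x, y) \<in> og_ord P \<and> x \<noteq> y"

definition og_covers :: "'a ogp \<Rightarrow> 'a \<Rightarrow> 'a \<Rightarrow> bool" where
  "og_covers P y x \<longleftrightarrow> og_lt P x y \<and> \<not> (\<exists>z. og_lt P x z \<and> og_lt P z y)"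

definition og_poset :: "'a ogp \<Rightarrow> bool" where
  "og_poset P \<longleftrightarrow> finite (og_elts P) \<and> og_ord P \<subseteq> og_elts P \<times> og_elts P
     \<and> (\<forall>x\<in>og_elts P. (x, x) \<in> og_ord P) \<and> antisym (og_ord P) \<and> trans (og_ord P)"

definition og_desc_chain :: "'a ogp \<Rightarrow> 'a \<Rightarrow> 'a list \<Rightarrow> bool" where
  "og_desc_chain P x c \<longleftrightarrow> c \<noteq> [] \<and> hd c = x
     \<and> (\<forall>i. Suc i < length c \<longrightarrow> og_covers P (c ! i) (c ! Suc i))
     \<and> \<not> (\<exists>z. og_lt P z (last c))"

definition og_graded :: "'a ogp \<Rightarrow> bool" where
  "og_graded P \<longleftrightarrow> (\<forall>x\<in>og_elts P. \<forall>c d. og_desc_chain P x c \<and> og_desc_chain P x d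
      \<longrightarrow> length c = length d)"

definition og_dim :: "'a ogp \<Rightarrow> 'a \<Rightarrow> int" where
  "og_dim P x = int (length (SOME c. og_desc_chain P x c)) - 1"

definition ogpos :: "'a ogp \<Rightarrow> bool" where
  "ogpos P \<longleftrightarrow> og_poset P \<and> og_graded P"

text \<open>Input (\<Delta>) and output (\<nabla>) of an element; a = True stands for +, False for -.\<close>
definition og_Delta :: "'a ogp \<Rightarrow> bool \<Rightarrow> 'a \<Rightarrow> 'a set" where
  "og_Delta P a x = {y. og_covers P x y \<and> og_pos P y x = a}"

definition og_Nabla :: "'a ogp \<Rightarrow> bool \<Rightarrow> 'a \<Rightarrow> 'a set" where
  "og_Nabla P a x = {y. og_covers P y x \<and> og_pos P x y = a}"

definition og_cl :: "'a ogp \<Rightarrow> 'a set \<Rightarrow> 'a set" where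
  "og_cl P U = {x \<in> og_elts P. \<exists>y\<in>U. (x, y) \<in> og_ord P}"

definition og_closed :: "'a ogp \<Rightarrow> 'a set \<Rightarrow> bool" where
  "og_closed P U \<longleftrightarrow> U \<subseteq> og_elts P \<and> og_cl P U = U"

definition og_max :: "'a ogp \<Rightarrow> 'a set \<Rightarrow> 'a set" where
  "og_max P U = {x \<in> U. \<not> (\<exists>y\<in>U. og_lt P x y)}"

definition og_setdim :: "'a ogp \<Rightarrow> 'a set \<Rightarrow> int" where
  "og_setdim P U = (if U = {} then -1 else Max (og_dim P ` U))"

definition og_layer :: "'a ogp \<Rightarrow> 'a set \<Rightarrow> int \<Rightarrow> 'a set" where
  "og_layer P U n = {x \<in> U. og_dim P x = n}"

definition og_Dn :: "'a ogp \<Rightarrow> bool \<Rightarrow> int \<Rightarrow> 'a set \<Rightarrow> 'a set" where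
  "og_Dn P a n U = {x \<in> og_layer P U n. og_Nabla P (\<not> a) x \<inter> U = {}}"

definition og_bdry :: "'a ogp \<Rightarrow> bool \<Rightarrow> int \<Rightarrow> 'a set \<Rightarrow> 'a set" where
  "og_bdry P a n U = (if n < 0 then {} else
      og_cl P (og_Dn P a n U) \<union> (\<Union>j\<in>{j. j < n}. og_cl P (og_layer P (og_max P U) j)))"

definition og_bdry2 :: "'a ogp \<Rightarrow> int \<Rightarrow> 'a set \<Rightarrow> 'a set" where
  "og_bdry2 P n U = og_bdry P False n U \<union> og_bdry P True n U"

definition og_bd :: "'a ogp \<Rightarrow> bool \<Rightarrow> 'a set \<Rightarrow> 'a set" where
  "og_bd P a U = og_bdry P a (og_setdim P U - 1) U"

definition og_round :: "'a ogp \<Rightarrow> 'a set \<Rightarrow> bool" where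
  "og_round P U \<longleftrightarrow> (\<forall>n. n < og_setdim P U \<longrightarrow>
      og_bdry P False n U \<inter> og_bdry P True n U = og_bdry2 P (n - 1) U)"

definition og_map :: "'a ogp \<Rightarrow> 'a ogp \<Rightarrow> ('a \<Rightarrow> 'a) \<Rightarrow> bool" where
  "og_map P Q f \<longleftrightarrow> f ` og_elts P \<subseteq> og_elts Q \<and>
     (\<forall>x\<in>og_elts P. \<forall>a n. f ` og_bdry P a n (og_cl P {x}) = og_bdry Q a n (og_cl Q {f x}))"

definition og_inclusion :: "'a ogp \<Rightarrow> 'a ogp \<Rightarrow> ('a \<Rightarrow> 'a) \<Rightarrow> bool" where
  "og_inclusion P Q f \<longleftrightarrow> og_map P Q f \<and> inj_on f (og_elts P)"

definition og_iso :: "'a ogp \<Rightarrow> 'a ogp \<Rightarrow> ('a \<Rightarrow> 'a) \<Rightarrow> bool" where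
  "og_iso P Q f \<longleftrightarrow> ogpos P \<and> ogpos Q \<and> bij_betw f (og_elts P) (og_elts Q)
     \<and> og_map P Q f \<and> og_map Q P (inv_into (og_elts P) f)"

definition og_restrict :: "'a ogp \<Rightarrow> 'a set \<Rightarrow> 'a ogp" where
  "og_restrict P V = \<lparr>og_elts = V, og_ord = og_ord P \<inter> (V \<times> V), og_pos = og_pos P\<rparr>"

text \<open>W is (a copy of) the pushout U #_k V of U <- \<partial>^+_k U \<cong> \<partial>^-_k V -> V, with the
  canonical inclusions i and j.\<close>
definition og_paste_via :: "nat \<Rightarrow> 'a ogp \<Rightarrow> 'a ogp \<Rightarrow> 'a ogp \<Rightarrow> ('a \<Rightarrow> 'a) \<Rightarrow> ('a \<Rightarrow> 'a) \<Rightarrow> bool" where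
  "og_paste_via k U V W i j \<longleftrightarrow> ogpos U \<and> ogpos V \<and> ogpos W
     \<and> og_inclusion U W i \<and> og_inclusion V W j
     \<and> og_elts W = i ` og_elts U \<union> j ` og_elts V
     \<and> i ` og_elts U \<inter> j ` og_elts V = i ` og_bdry U True (int k) (og_elts U)
     \<and> i ` og_bdry U True (int k) (og_elts U) = j ` og_bdry V False (int k) (og_elts V)"

text \<open>W is (a copy of) U \<Rightarrow> V: pushout of U <- \<partial>U \<cong> \<partial>V -> V (compatibly with \<partial>^\<pm>)
  together with a new top element t with \<Delta>^- t = U_n, \<Delta>^+ t = V_n.\<close>
definition og_rewrite_via :: "'a ogp \<Rightarrow> 'a ogp \<Rightarrow> 'a ogp \<Rightarrow> ('a \<Rightarrow> 'a) \<Rightarrow> ('a \<Rightarrow> 'a) \<Rightarrow> 'a \<Rightarrow> bool" where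
  "og_rewrite_via U V W i j t \<longleftrightarrow> ogpos U \<and> ogpos V \<and> ogpos W
     \<and> og_setdim U (og_elts U) = og_setdim V (og_elts V)
     \<and> og_inclusion U W i \<and> og_inclusion V W j
     \<and> t \<in> og_elts W \<and> t \<notin> i ` og_elts U \<union> j ` og_elts V
     \<and> og_elts W = i ` og_elts U \<union> j ` og_elts V \<union> {t}
     \<and> i ` og_elts U \<inter> j ` og_elts V = i ` og_bdry2 U (og_setdim U (og_elts U) - 1) (og_elts U)
     \<and> i ` og_bdry2 U (og_setdim U (og_elts U) - 1) (og_elts U)
         = j ` og_bdry2 V (og_setdim V (og_elts V) - 1) (og_elts V)
     \<and> (\<forall>a. i ` og_bd U a (og_elts U) = j ` og_bd V a (og_elts V))
     \<and> og_Delta W False t = i ` og_layer U (og_elts U) (og_setdim U (og_elts U))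
     \<and> og_Delta W True t = j ` og_layer V (og_elts V) (og_setdim V (og_elts V))"

inductive regmol :: "'a ogp \<Rightarrow> bool" where
  point: "ogpos P \<Longrightarrow> card (og_elts P) = 1 \<Longrightarrow> regmol P"
| iso: "regmol P \<Longrightarrow> og_iso P Q f \<Longrightarrow> regmol Q"
| paste: "regmol U \<Longrightarrow> regmol V \<Longrightarrow> int k < og_setdim U (og_elts U) \<Longrightarrow>
          int k < og_setdim V (og_elts V) \<Longrightarrow> og_paste_via k U V W i j \<Longrightarrow> regmol W"
| rewrite: "regmol U \<Longrightarrow> regmol V \<Longrightarrow> og_round U (og_elts U) \<Longrightarrow> og_round V (og_elts V) \<Longrightarrow>
          og_setdim U (og_elts U) = og_setdim V (og_elts V) \<Longrightarrow> og_rewrite_via U V W i j t \<Longrightarrow> regmol W"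

inductive subincl :: "('a \<Rightarrow> 'a) \<Rightarrow> 'a ogp \<Rightarrow> 'a ogp \<Rightarrow> bool" where
  iso: "regmol A \<Longrightarrow> regmol B \<Longrightarrow> og_iso A B f \<Longrightarrow> subincl f A B"
| pasteL: "regmol U \<Longrightarrow> regmol V \<Longrightarrow> regmol W \<Longrightarrow> og_paste_via k U V W i j \<Longrightarrow> subincl i U W"
| pasteR: "regmol U \<Longrightarrow> regmol V \<Longrightarrow> regmol W \<Longrightarrow> og_paste_via k U V W i j \<Longrightarrow> subincl j V W"
| comp: "subincl f A B \<Longrightarrow> subincl g B C \<Longrightarrow> subincl (g \<circ> f) A C"

text \<open>V \<sqsubseteq> U: V closed in U and its inclusion is a submolecule inclusion
  (functions are compared on the carrier only).\<close>
definition og_submol :: "'a set \<Rightarrow> 'a ogp \<Rightarrow> bool" where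
  "og_submol V U \<longleftrightarrow> og_closed U V \<and>
     (\<exists>g. subincl g (og_restrict U V) U \<and> (\<forall>x\<in>V. g x = x))"

definition og_hasse :: "'a ogp \<Rightarrow> ('a \<times> 'a) set" where
  "og_hasse P = {(y, x). x \<in> og_elts P \<and> y \<in> og_elts P \<and>
       (y \<in> og_Delta P False x \<or> x \<in> og_Delta P True y)}"

definition og_acyclic :: "'a ogp \<Rightarrow> bool" where
  "og_acyclic P \<longleftrightarrow> acyclic (og_hasse P)"

definition og_Dk :: "'a ogp \<Rightarrow> bool \<Rightarrow> int \<Rightarrow> 'a \<Rightarrow> 'a set" where
  "og_Dk P a k x = og_Dn P a k (og_cl P {x})"

definition og_flow :: "'a ogp \<Rightarrow> int \<Rightarrow> ('a \<times> 'a) set" where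
  "og_flow P k = {(x, y). x \<in> og_elts P \<and> y \<in> og_elts P \<and> og_dim P x > k \<and> og_dim P y > k
       \<and> og_Dk P True k x \<inter> og_Dk P False k y \<noteq> {}}"

definition og_dimwise_acyclic :: "'a ogp \<Rightarrow> bool" where
  "og_dimwise_acyclic P \<longleftrightarrow> (\<forall>k::nat. acyclic (og_flow P (int k)))"

definition og_mflow :: "'a ogp \<Rightarrow> int \<Rightarrow> ('a \<times> 'a) set" where
  "og_mflow P k = og_flow P k \<inter> (og_max P (og_elts P) \<times> og_max P (og_elts P))"

definition og_frdim :: "'a ogp \<Rightarrow> int" where
  "og_frdim P = og_setdim P (\<Union>{og_cl P {x} \<inter> og_cl P {y} | x y.
       x \<in> og_max P (og_elts P) \<and> y \<in> og_max P (og_elts P) \<and> x \<noteq> y})"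

definition og_frame_acyclic :: "'a ogp \<Rightarrow> bool" where
  "og_frame_acyclic U \<longleftrightarrow> (\<forall>V. og_submol V U \<longrightarrow>
       acyclic (og_mflow (og_restrict U V) (og_frdim (og_restrict U V))))"

end

theory Submission
  imports Defs
begin

text \<open>Every regular molecule satisfies an invariant that holds for the point and survives
  isomorphisms, pastings and rewrites: (i) for each sign \<open>a\<close>, every element of dimension below
  \<open>dim U\<close> without \<open>-a\<close>-cofaces lies in \<open>\<partial>\<^sup>a U\<close>; (ii) every element \<open>x\<close> is reached in the oriented
  Hasse diagram from each element of the input boundary of \<open>cl {x}\<close> and reaches each element of
  its output boundary. By (ii), a flow edge \<open>x \<rightarrow> y\<close> witnessed by \<open>z \<in> \<Delta>\<^sup>+\<^sub>k x \<inter> \<Delta>\<^sup>-\<^sub>k y\<close>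
  gives a Hasse path \<open>x \<rightarrow> z \<rightarrow> y\<close>, so a cycle in a flow graph yields a cycle in the Hasse
  diagram. Property (i) is what lets (ii) pass through a rewrite \<open>U \<Rightarrow> V\<close>: an element lacking
  cofaces of one sign lies in \<open>U\<close> or in \<open>V\<close> accordingly, hence below a face of the new top element.

  The second implication needs no regularity: a submolecule inclusion maps edges of \<open>\<F>\<^sub>k V\<close> to
  edges of \<open>\<F>\<^sub>k U\<close>, and \<open>\<M>\<^sub>k V\<close> is a subgraph of \<open>\<F>\<^sub>k V\<close>.\<close>

lemma finite_ex_maximal:
  assumes "finite S" "S \<noteq> {}"
    and trans: "\<And>a b c. R a b \<Longrightarrow> R b c \<Longrightarrow> R a c" and irrefl: "\<And>a. \<not> R a a"
  shows "\<exists>y\<in>S. \<forall>z\<in>S. \<not> R y z"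
  using assms(1,2)
proof (induction S rule: finite_ne_induct)
  case (singleton x)
  then show ?case using irrefl by auto
next
  case (insert x F)
  then obtain y where y: "y \<in> F" "\<forall>z\<in>F. \<not> R y z" by auto
  show ?case
  proof (cases "R y x")
    case True
    then have "\<forall>z\<in>insert x F. \<not> R x z" using y trans irrefl by blast
    then show ?thesis by blast
  qed (use y in blast)
qed

lemma rtrancl_map:
  assumes "(x, y) \<in> r\<^sup>*" and "\<And>u v. (u, v) \<in> r \<Longrightarrow> (f u, f v) \<in> s"
  shows "(f x, f y) \<in> s\<^sup>*"
  using assms(1) by (induction rule: rtrancl_induct) (auto intro: rtrancl_into_rtrancl assms(2))

lemma acyclic_if_edges_map_to_paths:
  assumes "acyclic s" and "\<And>x y. (x, y) \<in> r \<Longrightarrow> (f x, f y) \<in> s\<^sup>+"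
  shows "acyclic r"
proof -
  have "(f u, f v) \<in> s\<^sup>+" if "(u, v) \<in> r\<^sup>+" for u v
    using that by (induction rule: trancl_induct) (auto dest: assms(2) intro: trancl_trans)
  then show ?thesis using assms(1) unfolding acyclic_def by blast
qed

definition bdry_generator :: "'a ogp \<Rightarrow> bool \<Rightarrow> int \<Rightarrow> 'a set \<Rightarrow> 'a \<Rightarrow> bool" where
  "bdry_generator P a n S y \<longleftrightarrow> y \<in> S \<and>
     (og_dim P y = n \<and> og_Nabla P (\<not> a) y \<inter> S = {} \<or> y \<in> og_max P S \<and> og_dim P y < n)"

lemma mem_bdry_iff:
  assumes "n \<ge> 0"
  shows "z \<in> og_bdry P a n S \<longleftrightarrow> z \<in> og_elts P \<and> (\<exists>y. (z, y) \<in> og_ord P \<and> bdry_generator P a n S y)"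
  using assms unfolding og_bdry_def og_cl_def og_Dn_def og_layer_def bdry_generator_def og_max_def
  by auto

lemma bdry_subset_cl: "og_bdry P a n S \<subseteq> og_cl P S"
proof (cases "n < 0")
  case False
  then show ?thesis by (auto simp: mem_bdry_iff og_cl_def bdry_generator_def)
qed (simp add: og_bdry_def)

locale ogposet =
  fixes P :: "'a ogp"
  assumes ogpos: "ogpos P"
begin

lemma finite_elts: "finite (og_elts P)"
  using ogpos by (simp add: ogpos_def og_poset_def)

lemma ord_in_elts: "(x, y) \<in> og_ord P \<Longrightarrow> x \<in> og_elts P \<and> y \<in> og_elts P"
  using ogpos by (auto simp: ogpos_def og_poset_def)

lemma ord_refl: "x \<in> og_elts P \<Longrightarrow> (x, x) \<in> og_ord P"
  using ogpos by (auto simp: ogpos_def og_poset_def)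

lemma ord_trans: "(x, y) \<in> og_ord P \<Longrightarrow> (y, z) \<in> og_ord P \<Longrightarrow> (x, z) \<in> og_ord P"
  using ogpos unfolding ogpos_def og_poset_def trans_def by blast

lemma ord_antisym: "(x, y) \<in> og_ord P \<Longrightarrow> (y, x) \<in> og_ord P \<Longrightarrow> x = y"
  using ogpos unfolding ogpos_def og_poset_def antisym_def by blast

lemma lt_trans: "og_lt P x y \<Longrightarrow> og_lt P y z \<Longrightarrow> og_lt P x z"
  unfolding og_lt_def using ord_trans ord_antisym by blast

lemma lt_irrefl: "\<not> og_lt P x x"
  by (simp add: og_lt_def)

lemma lt_in_elts: "og_lt P x y \<Longrightarrow> x \<in> og_elts P \<and> y \<in> og_elts P"
  unfolding og_lt_def using ord_in_elts by blast

lemma covers_imp_lt: "og_covers P y x \<Longrightarrow> og_lt P x y"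
  by (simp add: og_covers_def)

lemma ex_maximal:
  assumes "S \<subseteq> og_elts P" "S \<noteq> {}"
  shows "\<exists>y\<in>S. \<forall>z\<in>S. \<not> og_lt P y z"
  using finite_ex_maximal[of S "og_lt P"] finite_subset[OF assms(1) finite_elts] assms(2)
    lt_trans lt_irrefl by blast

lemma desc_chain_Cons:
  assumes "og_desc_chain P x c" "og_covers P y x"
  shows "og_desc_chain P y (y # c)"
  unfolding og_desc_chain_def
proof (intro conjI allI impI)
  fix i assume "Suc i < length (y # c)"
  then show "og_covers P ((y # c) ! i) ((y # c) ! Suc i)"
    using assms unfolding og_desc_chain_def by (cases i) (auto simp: hd_conv_nth)
qed (use assms(1) in \<open>auto simp: og_desc_chain_def\<close>)

lemma desc_chain_exists: "x \<in> og_elts P \<Longrightarrow> \<exists>c. og_desc_chain P x c"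
proof (induction "card {w. og_lt P w x}" arbitrary: x rule: less_induct)
  case less
  show ?case
  proof (cases "\<exists>z. og_lt P z x")
    case False
    then show ?thesis by (intro exI[of _ "[x]"]) (auto simp: og_desc_chain_def)
  next
    case True
    let ?S = "{w. og_lt P w x}"
    have S_elts: "?S \<subseteq> og_elts P" using lt_in_elts by blast
    obtain y where y: "y \<in> ?S" "\<forall>z\<in>?S. \<not> og_lt P y z"
      using ex_maximal[OF S_elts] True by blast
    have "og_covers P x y" using y unfolding og_covers_def by auto
    moreover have "card {w. og_lt P w y} < card ?S"
      using y lt_trans lt_irrefl
      by (intro psubset_card_mono finite_subset[OF S_elts finite_elts]) auto
    ultimately show ?thesis using less y lt_in_elts desc_chain_Cons by blast
  qed
qed

lemma dim_eq_chain_length: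
  assumes "x \<in> og_elts P" "og_desc_chain P x c"
  shows "og_dim P x = int (length c) - 1"
proof -
  have "og_desc_chain P x (SOME c. og_desc_chain P x c)" using assms(2) by (rule someI)
  then show ?thesis
    using ogpos assms unfolding og_dim_def ogpos_def og_graded_def by metis
qed

lemma dim_nonneg: "x \<in> og_elts P \<Longrightarrow> og_dim P x \<ge> 0"
  using desc_chain_exists dim_eq_chain_length by (fastforce simp: og_desc_chain_def)

lemma dim_covers:
  assumes "og_covers P y x"
  shows "og_dim P y = og_dim P x + 1"
proof -
  have elts: "x \<in> og_elts P" "y \<in> og_elts P" using assms covers_imp_lt lt_in_elts by blast+
  obtain c where c: "og_desc_chain P x c" using desc_chain_exists elts(1) by blast
  show ?thesis
    using dim_eq_chain_length[OF elts(2) desc_chain_Cons[OF c assms]]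
      dim_eq_chain_length[OF elts(1) c] by simp
qed

lemma dim_strict_mono: "og_lt P x y \<Longrightarrow> og_dim P x < og_dim P y"
proof (induction "card {w. og_lt P w y}" arbitrary: y rule: less_induct)
  case less
  let ?S = "{w. og_lt P w y \<and> (x, w) \<in> og_ord P}"
  have S_elts: "?S \<subseteq> og_elts P" using lt_in_elts by blast
  have "x \<in> ?S" using less.prems ord_refl lt_in_elts by auto
  then obtain w where w: "w \<in> ?S" "\<forall>z\<in>?S. \<not> og_lt P w z"
    using ex_maximal[OF S_elts] by blast
  have "\<not> (og_lt P w z \<and> og_lt P z y)" for z
    using w ord_trans unfolding og_lt_def by blast
  then have cov: "og_covers P y w" using w unfolding og_covers_def by blast
  show ?case
  proof (cases "w = x")
    case False
    then have "og_lt P x w" using w by (auto simp: og_lt_def)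
    moreover have "card {z. og_lt P z w} < card {w. og_lt P w y}"
      using w lt_trans lt_irrefl lt_in_elts
      by (intro psubset_card_mono finite_subset[OF _ finite_elts]) auto
    ultimately have "og_dim P x < og_dim P w" using less.hyps by blast
    then show ?thesis using dim_covers[OF cov] by simp
  qed (use dim_covers[OF cov] in simp)
qed

lemma dim_mono: "(x, y) \<in> og_ord P \<Longrightarrow> og_dim P x \<le> og_dim P y"
  using dim_strict_mono[of x y] unfolding og_lt_def by (cases "x = y") auto

lemma ord_dim_eq_imp_eq: "(x, y) \<in> og_ord P \<Longrightarrow> og_dim P x = og_dim P y \<Longrightarrow> x = y"
  using dim_strict_mono[of x y] unfolding og_lt_def by force

lemma covers_if_dim_succ:
  assumes "og_lt P x y" "og_dim P y = og_dim P x + 1"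
  shows "og_covers P y x"
  using assms dim_strict_mono[of x] dim_strict_mono[of _ y] unfolding og_covers_def
  by fastforce

lemma ex_max_above:
  assumes "x \<in> S" "S \<subseteq> og_elts P"
  shows "\<exists>m\<in>og_max P S. (x, m) \<in> og_ord P"
proof -
  let ?T = "{m \<in> S. (x, m) \<in> og_ord P}"
  have "x \<in> ?T" using assms ord_refl by auto
  then obtain m where m: "m \<in> ?T" "\<forall>z\<in>?T. \<not> og_lt P m z"
    using ex_maximal[of ?T] assms(2) by blast
  then have "\<not> og_lt P m z" if "z \<in> S" for z
    using that ord_trans unfolding og_lt_def by blast
  then show ?thesis using m unfolding og_max_def by blast
qed

lemma dim_le_setdim: "S \<subseteq> og_elts P \<Longrightarrow> x \<in> S \<Longrightarrow> og_dim P x \<le> og_setdim P S"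
  using finite_subset[OF _ finite_elts] by (auto simp: og_setdim_def)

lemma setdim_attained:
  assumes "S \<subseteq> og_elts P" "S \<noteq> {}"
  shows "\<exists>x\<in>S. og_dim P x = og_setdim P S"
proof -
  have "Max (og_dim P ` S) \<in> og_dim P ` S"
    using assms finite_subset[OF assms(1) finite_elts] by (intro Max_in) auto
  then show ?thesis using assms(2) unfolding og_setdim_def by auto
qed

lemma setdim_mono: "S \<subseteq> T \<Longrightarrow> T \<subseteq> og_elts P \<Longrightarrow> S \<noteq> {} \<Longrightarrow> og_setdim P S \<le> og_setdim P T"
  using setdim_attained[of S] dim_le_setdim[of T] by fastforce

lemma max_if_dim_eq_setdim:
  assumes "S \<subseteq> og_elts P" "x \<in> S" "og_dim P x = og_setdim P S"
  shows "x \<in> og_max P S"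
  using assms dim_strict_mono dim_le_setdim[OF assms(1)] unfolding og_max_def by fastforce

lemma max_Nabla_disjoint: "y \<in> og_max P S \<Longrightarrow> og_Nabla P b y \<inter> S = {}"
  unfolding og_max_def og_Nabla_def og_covers_def by blast

lemma mem_cl_singleton: "z \<in> og_cl P {x} \<longleftrightarrow> (z, x) \<in> og_ord P"
  using ord_in_elts by (auto simp: og_cl_def)

lemma cl_subset_elts: "og_cl P S \<subseteq> og_elts P"
  by (auto simp: og_cl_def)

lemma cl_idem: "og_cl P (og_cl P S) = og_cl P S"
  using ord_trans ord_refl by (auto simp: og_cl_def)

lemma closed_elts: "og_closed P (og_elts P)"
  using ord_refl ord_in_elts by (auto simp: og_closed_def og_cl_def)

lemma closed_subset_elts: "og_closed P S \<Longrightarrow> S \<subseteq> og_elts P"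
  by (simp add: og_closed_def)

lemma closed_downward: "og_closed P S \<Longrightarrow> (x, y) \<in> og_ord P \<Longrightarrow> y \<in> S \<Longrightarrow> x \<in> S"
  unfolding og_closed_def og_cl_def using ord_in_elts by blast

lemma max_cl_singleton: "x \<in> og_elts P \<Longrightarrow> og_max P (og_cl P {x}) = {x}"
  using ord_refl ord_antisym by (auto simp: og_max_def mem_cl_singleton og_lt_def)

lemma bdry_dim_le:
  assumes "z \<in> og_bdry P a n S"
  shows "og_dim P z \<le> n"
proof (cases "n < 0")
  case False
  then obtain y where "(z, y) \<in> og_ord P" "og_dim P y \<le> n"
    using assms by (auto simp: mem_bdry_iff bdry_generator_def)
  then show ?thesis using dim_mono by fastforce
qed (use assms in \<open>simp add: og_bdry_def\<close>)

lemma bdry_cl_singleton_above_dim: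
  assumes x: "x \<in> og_elts P" and n: "og_dim P x < n"
  shows "og_bdry P a n (og_cl P {x}) = og_cl P {x}"
proof -
  have "n \<ge> 0" using n dim_nonneg[OF x] by linarith
  moreover have "bdry_generator P a n (og_cl P {x}) x"
    using x n max_cl_singleton by (auto simp: bdry_generator_def mem_cl_singleton ord_refl)
  ultimately show ?thesis
    using bdry_subset_cl[of P a n "og_cl P {x}"] cl_idem mem_bdry_iff cl_subset_elts
    by (fastforce simp: mem_cl_singleton)
qed

lemma bdry_cl_singleton_if_Delta:
  assumes "z \<in> og_Delta P a y"
  shows "z \<in> og_bdry P a (og_dim P y - 1) (og_cl P {y})"
proof -
  have cov: "og_covers P y z" and sign: "og_pos P z y = a" using assms by (auto simp: og_Delta_def)
  have ze: "z \<in> og_elts P" using cov covers_imp_lt lt_in_elts by blast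
  have z: "og_dim P z = og_dim P y - 1" using dim_covers[OF cov] by simp
  have "og_Nabla P (\<not> a) z \<inter> og_cl P {y} = {}"
  proof (rule ccontr)
    assume "og_Nabla P (\<not> a) z \<inter> og_cl P {y} \<noteq> {}"
    then obtain w where w: "og_covers P w z" "og_pos P z w = (\<not> a)" "(w, y) \<in> og_ord P"
      by (auto simp: og_Nabla_def mem_cl_singleton)
    have "og_dim P w = og_dim P y" using dim_covers[OF w(1)] dim_covers[OF cov] by simp
    then have "w = y" by (rule ord_dim_eq_imp_eq[OF w(3)])
    then show False using w(2) sign by simp
  qed
  moreover have "z \<in> og_cl P {y}"
    using cov covers_imp_lt by (auto simp: og_lt_def mem_cl_singleton)
  ultimately have "bdry_generator P a (og_dim P y - 1) (og_cl P {y}) z"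
    using z unfolding bdry_generator_def by blast
  moreover have "og_dim P y - 1 \<ge> 0" using dim_nonneg[OF ze] z by linarith
  ultimately show ?thesis using ze ord_refl by (auto simp: mem_bdry_iff)
qed

lemma Delta_if_bdry_cl_singleton:
  assumes y: "y \<in> og_elts P" and z: "og_dim P z = og_dim P y - 1"
    and bdry: "z \<in> og_bdry P a (og_dim P y - 1) (og_cl P {y})"
  shows "z \<in> og_Delta P a y"
proof -
  have "og_dim P y - 1 \<ge> 0" using bdry by (auto simp: og_bdry_def split: if_splits)
  then obtain w where w: "(z, w) \<in> og_ord P" "bdry_generator P a (og_dim P y - 1) (og_cl P {y}) w"
    using bdry by (auto simp: mem_bdry_iff)
  then have wy: "(w, y) \<in> og_ord P" "og_dim P w = og_dim P y - 1"
    "og_Nabla P (\<not> a) w \<inter> og_cl P {y} = {}"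
    using max_cl_singleton[OF y] by (auto simp: bdry_generator_def mem_cl_singleton)
  then have "z = w" using ord_dim_eq_imp_eq[OF w(1)] z by simp
  have "og_dim P z \<noteq> og_dim P y" using z by linarith
  then have "og_lt P z y" using wy \<open>z = w\<close> by (auto simp: og_lt_def)
  moreover have "og_dim P y = og_dim P z + 1" using z by simp
  ultimately have cov: "og_covers P y z" by (rule covers_if_dim_succ)
  have "y \<in> og_cl P {y}" using y ord_refl mem_cl_singleton by blast
  then have "og_pos P z y = a" using wy(3) cov \<open>z = w\<close> by (auto simp: og_Nabla_def)
  then show ?thesis using cov by (simp add: og_Delta_def)
qed

end

definition signed_hasse :: "'a ogp \<Rightarrow> bool \<Rightarrow> ('a \<times> 'a) set" where
  "signed_hasse P a = (if a then og_hasse P else (og_hasse P)\<inverse>)"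

text \<open>As \<^const>\<open>signed_hasse\<close> reverses the Hasse diagram for \<open>a = False\<close>, this says that \<open>x\<close>
  is reached from its input boundary and reaches its output boundary.\<close>

definition hasse_connects_bdry :: "'a ogp \<Rightarrow> 'a \<Rightarrow> bool" where
  "hasse_connects_bdry P x \<longleftrightarrow> (\<forall>a. \<forall>z\<in>og_cl P {x}.
     og_Nabla P (\<not> a) z \<inter> og_cl P {x} = {} \<longrightarrow> (x, z) \<in> (signed_hasse P a)\<^sup>*)"

definition bdry_complete :: "'a ogp \<Rightarrow> bool \<Rightarrow> 'a set \<Rightarrow> bool" where
  "bdry_complete P a S \<longleftrightarrow> (\<forall>z\<in>S. og_dim P z < og_setdim P S \<and> og_Nabla P (\<not> a) z \<inter> S = {}
     \<longrightarrow> z \<in> og_bd P a S)"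

lemma hasse_connects_bdryD:
  "hasse_connects_bdry P x \<Longrightarrow> z \<in> og_cl P {x} \<Longrightarrow> og_Nabla P (\<not> a) z \<inter> og_cl P {x} = {}
    \<Longrightarrow> (x, z) \<in> (signed_hasse P a)\<^sup>*"
  by (simp add: hasse_connects_bdry_def)

context ogposet
begin

lemma Delta_signed_hasse: "x \<in> og_elts P \<Longrightarrow> z \<in> og_Delta P a x \<Longrightarrow> (x, z) \<in> signed_hasse P a"
  using covers_imp_lt lt_in_elts by (auto simp: signed_hasse_def og_hasse_def og_Delta_def)

lemma flow_edge_hasse_path:
  assumes hasse: "\<And>x. x \<in> og_elts P \<Longrightarrow> hasse_connects_bdry P x" and e: "(x, y) \<in> og_flow P k"
  shows "(x, y) \<in> (og_hasse P)\<^sup>+"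
proof -
  obtain z where "z \<in> og_Dk P True k x" "z \<in> og_Dk P False k y"
    using e by (auto simp: og_flow_def)
  then have zx: "z \<in> og_cl P {x}" "og_Nabla P False z \<inter> og_cl P {x} = {}" "og_dim P z = k"
    and zy: "z \<in> og_cl P {y}" "og_Nabla P True z \<inter> og_cl P {y} = {}"
    by (auto simp: og_Dk_def og_Dn_def og_layer_def)
  have xy: "x \<in> og_elts P" "y \<in> og_elts P" "og_dim P x > k" using e by (auto simp: og_flow_def)
  have "(x, z) \<in> (og_hasse P)\<^sup>*"
    using hasse_connects_bdryD[OF hasse[OF xy(1)] zx(1), of True] zx(2) by (simp add: signed_hasse_def)
  moreover have "x \<noteq> z" using zx xy by auto
  ultimately have "(x, z) \<in> (og_hasse P)\<^sup>+" by (simp add: rtrancl_eq_or_trancl)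
  moreover have "(z, y) \<in> (og_hasse P)\<^sup>*"
    using hasse_connects_bdryD[OF hasse[OF xy(2)] zy(1), of False] zy(2)
    by (simp add: signed_hasse_def rtrancl_converse)
  ultimately show ?thesis by (rule trancl_rtrancl_trancl)
qed

end

locale og_incl = P: ogposet P + Q: ogposet Q
  for P :: "'a ogp" and Q :: "'a ogp" +
  fixes f :: "'a \<Rightarrow> 'a"
  assumes inclusion: "og_inclusion P Q f"
begin

lemma image_elts: "x \<in> og_elts P \<Longrightarrow> f x \<in> og_elts Q"
  using inclusion by (auto simp: og_inclusion_def og_map_def)

lemma eq_iff: "x \<in> og_elts P \<Longrightarrow> y \<in> og_elts P \<Longrightarrow> f x = f y \<longleftrightarrow> x = y"
  using inclusion by (auto simp: og_inclusion_def dest: inj_onD)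

lemma bdry_cl_singleton_image:
  "x \<in> og_elts P \<Longrightarrow> f ` og_bdry P a n (og_cl P {x}) = og_bdry Q a n (og_cl Q {f x})"
  using inclusion by (simp add: og_inclusion_def og_map_def)

lemma cl_singleton_image:
  assumes x: "x \<in> og_elts P"
  shows "f ` og_cl P {x} = og_cl Q {f x}"
proof -
  let ?n = "max (og_dim P x) (og_dim Q (f x)) + 1"
  show ?thesis
    using bdry_cl_singleton_image[OF x, of True ?n] P.bdry_cl_singleton_above_dim[OF x] Q.bdry_cl_singleton_above_dim[OF image_elts[OF x]]
    by simp
qed

lemma ord_iff:
  assumes "x \<in> og_elts P" "y \<in> og_elts P"
  shows "(f x, f y) \<in> og_ord Q \<longleftrightarrow> (x, y) \<in> og_ord P"
proof
  assume "(f x, f y) \<in> og_ord Q"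
  then have "f x \<in> f ` og_cl P {y}" using cl_singleton_image[OF assms(2)] Q.mem_cl_singleton by blast
  then obtain w where "w \<in> og_cl P {y}" "f x = f w" by blast
  then show "(x, y) \<in> og_ord P" using eq_iff[OF assms(1)] P.cl_subset_elts P.mem_cl_singleton by blast
next
  assume "(x, y) \<in> og_ord P"
  then show "(f x, f y) \<in> og_ord Q"
    using cl_singleton_image[OF assms(2)] P.mem_cl_singleton Q.mem_cl_singleton by blast
qed

lemma below_image:
  assumes "x \<in> og_elts P" "(z', f x) \<in> og_ord Q"
  shows "\<exists>z\<in>og_elts P. z' = f z \<and> (z, x) \<in> og_ord P"
  using cl_singleton_image[OF assms(1)] assms(2) P.cl_subset_elts
  by (force simp: P.mem_cl_singleton Q.mem_cl_singleton[symmetric])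

lemma lt_iff: "x \<in> og_elts P \<Longrightarrow> y \<in> og_elts P \<Longrightarrow> og_lt Q (f x) (f y) \<longleftrightarrow> og_lt P x y"
  using ord_iff eq_iff by (simp add: og_lt_def)

lemma covers_iff:
  assumes x: "x \<in> og_elts P" and y: "y \<in> og_elts P"
  shows "og_covers Q (f y) (f x) \<longleftrightarrow> og_covers P y x"
proof
  assume c: "og_covers Q (f y) (f x)"
  have "\<not> (og_lt P x z \<and> og_lt P z y)" for z
    using c lt_iff[OF x, of z] lt_iff[OF _ y, of z] P.lt_in_elts unfolding og_covers_def by blast
  then show "og_covers P y x" using c lt_iff[OF x y] unfolding og_covers_def by blast
next
  assume c: "og_covers P y x"
  have "\<not> (og_lt Q (f x) z' \<and> og_lt Q z' (f y))" for z'
  proof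
    assume z': "og_lt Q (f x) z' \<and> og_lt Q z' (f y)"
    then obtain z where "z \<in> og_elts P" "z' = f z" using below_image[OF y] by (auto simp: og_lt_def)
    then show False using c z' lt_iff[OF x] lt_iff[OF _ y] unfolding og_covers_def by blast
  qed
  then show "og_covers Q (f y) (f x)" using c lt_iff[OF x y] unfolding og_covers_def by blast
qed

lemma desc_chain_image:
  assumes x: "x \<in> og_elts P" and c: "og_desc_chain P x c"
  shows "og_desc_chain Q (f x) (map f c)"
proof -
  have elts: "c ! i \<in> og_elts P" if "i < length c" for i
  proof (cases i)
    case 0
    then show ?thesis using c x that by (auto simp: og_desc_chain_def hd_conv_nth)
  next
    case (Suc j)
    then have "og_covers P (c ! j) (c ! i)" using c that by (auto simp: og_desc_chain_def)
    then show ?thesis using P.covers_imp_lt P.lt_in_elts by blast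
  qed
  have ne: "c \<noteq> []" using c by (simp add: og_desc_chain_def)
  then have last: "last c \<in> og_elts P" using elts[of "length c - 1"] by (simp add: last_conv_nth)
  have "\<not> og_lt Q z' (f (last c))" for z'
  proof
    assume z': "og_lt Q z' (f (last c))"
    then obtain z where "z \<in> og_elts P" "z' = f z" using below_image[OF last] by (auto simp: og_lt_def)
    then show False using c z' lt_iff[OF _ last] by (auto simp: og_desc_chain_def)
  qed
  moreover have "og_covers Q (f (c ! i)) (f (c ! Suc i))" if "Suc i < length c" for i
    using c that covers_iff elts unfolding og_desc_chain_def by simp
  ultimately show ?thesis
    using c ne by (simp add: og_desc_chain_def hd_map last_map)
qed

lemma dim_image:
  assumes x: "x \<in> og_elts P"
  shows "og_dim Q (f x) = og_dim P x"
proof -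
  obtain c where c: "og_desc_chain P x c" using P.desc_chain_exists x by blast
  show ?thesis
    using P.dim_eq_chain_length[OF x c] Q.dim_eq_chain_length[OF image_elts[OF x] desc_chain_image[OF x c]]
    by simp
qed

lemma Delta_image:
  assumes y: "y \<in> og_elts P" and z: "z \<in> og_Delta P a y"
  shows "f z \<in> og_Delta Q a (f y)"
proof -
  have cov: "og_covers P y z" using z by (simp add: og_Delta_def)
  have ze: "z \<in> og_elts P" using cov P.covers_imp_lt P.lt_in_elts by blast
  have zdim: "og_dim P z = og_dim P y - 1" using P.dim_covers[OF cov] by simp
  have "z \<in> og_bdry P a (og_dim P y - 1) (og_cl P {y})"
    using P.bdry_cl_singleton_if_Delta[OF z] .
  then have "f z \<in> og_bdry Q a (og_dim P y - 1) (og_cl Q {f y})"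
    using bdry_cl_singleton_image[OF y] by blast
  then have "f z \<in> og_bdry Q a (og_dim Q (f y) - 1) (og_cl Q {f y})"
    using dim_image[OF y] by simp
  moreover have "og_dim Q (f z) = og_dim Q (f y) - 1"
    using zdim dim_image[OF y] dim_image[OF ze] by simp
  ultimately show ?thesis using Q.Delta_if_bdry_cl_singleton[OF image_elts[OF y]] by blast
qed

lemma pos_image: "y \<in> og_elts P \<Longrightarrow> og_covers P y z \<Longrightarrow> og_pos Q (f z) (f y) = og_pos P z y"
  using Delta_image[of y z "og_pos P z y"] by (simp add: og_Delta_def)

lemma Nabla_inter_image:
  assumes x: "x \<in> og_elts P" and S: "S \<subseteq> og_elts P"
  shows "og_Nabla Q b (f x) \<inter> f ` S = f ` (og_Nabla P b x \<inter> S)"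
  using covers_iff[OF x] pos_image S by (auto simp: og_Nabla_def)

lemma Nabla_disjoint_iff:
  "x \<in> og_elts P \<Longrightarrow> S \<subseteq> og_elts P \<Longrightarrow>
    og_Nabla Q b (f x) \<inter> f ` S = {} \<longleftrightarrow> og_Nabla P b x \<inter> S = {}"
  using Nabla_inter_image by simp

lemma max_image_iff:
  assumes "S \<subseteq> og_elts P" "y \<in> S"
  shows "f y \<in> og_max Q (f ` S) \<longleftrightarrow> y \<in> og_max P S"
  using assms lt_iff by (auto simp: og_max_def subset_iff)

lemma generator_image_iff:
  assumes "S \<subseteq> og_elts P" "y \<in> S"
  shows "bdry_generator Q a n (f ` S) (f y) \<longleftrightarrow> bdry_generator P a n S y"
proof -
  have y: "y \<in> og_elts P" using assms by blast
  show ?thesis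
    unfolding bdry_generator_def Nabla_disjoint_iff[OF y assms(1)] max_image_iff[OF assms]
      dim_image[OF y] using assms(2) by blast
qed

lemma bdry_image:
  assumes S: "S \<subseteq> og_elts P"
  shows "og_bdry Q a n (f ` S) = f ` og_bdry P a n S"
proof (cases "n < 0")
  case False
  have gen: "bdry_generator Q a n (f ` S) y' \<longleftrightarrow> (\<exists>y\<in>S. y' = f y \<and> bdry_generator P a n S y)" for y'
  proof
    assume g: "bdry_generator Q a n (f ` S) y'"
    then obtain y where "y \<in> S" "y' = f y" by (auto simp: bdry_generator_def)
    then show "\<exists>y\<in>S. y' = f y \<and> bdry_generator P a n S y" using g generator_image_iff[OF S] by blast
  qed (use generator_image_iff[OF S] in blast)
  show ?thesis
  proof (intro equalityI subsetI)
    fix z' assume "z' \<in> og_bdry Q a n (f ` S)"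
    then obtain y where y: "y \<in> S" "(z', f y) \<in> og_ord Q" "bdry_generator P a n S y"
      using False gen by (auto simp: mem_bdry_iff)
    then obtain z where "z \<in> og_elts P" "z' = f z" "(z, y) \<in> og_ord P"
      using below_image S by blast
    moreover have "z \<in> og_bdry P a n S" using calculation False y by (auto simp: mem_bdry_iff)
    ultimately show "z' \<in> f ` og_bdry P a n S" by blast
  next
    fix z' assume "z' \<in> f ` og_bdry P a n S"
    then obtain z y where z: "z' = f z" "z \<in> og_elts P" "(z, y) \<in> og_ord P"
      and y: "bdry_generator P a n S y"
      using False by (auto simp: mem_bdry_iff)
    have "y \<in> S" using y by (simp add: bdry_generator_def)
    then have "(f z, f y) \<in> og_ord Q" "bdry_generator Q a n (f ` S) (f y)"
      using z y ord_iff S gen by blast+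
    then show "z' \<in> og_bdry Q a n (f ` S)"
      using False z image_elts by (auto simp: mem_bdry_iff)
  qed
qed (simp add: og_bdry_def)

lemma cl_image: "S \<subseteq> og_elts P \<Longrightarrow> og_cl Q (f ` S) = f ` og_cl P S"
  using below_image ord_iff image_elts by (fastforce simp: og_cl_def)

lemma closed_image: "og_closed Q (f ` og_elts P)"
  using cl_image[of "og_elts P"] P.closed_elts image_elts by (auto simp: og_closed_def)

lemma setdim_image: "S \<subseteq> og_elts P \<Longrightarrow> og_setdim Q (f ` S) = og_setdim P S"
  using dim_image by (simp add: og_setdim_def image_image subset_eq cong: image_cong)

lemma bd_image: "S \<subseteq> og_elts P \<Longrightarrow> og_bd Q a (f ` S) = f ` og_bd P a S"
  by (simp add: og_bd_def setdim_image bdry_image)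

lemma layer_image: "S \<subseteq> og_elts P \<Longrightarrow> og_layer Q (f ` S) n = f ` og_layer P S n"
  using dim_image by (auto simp: og_layer_def)

lemma Dn_image: "S \<subseteq> og_elts P \<Longrightarrow> og_Dn Q a n (f ` S) = f ` og_Dn P a n S"
  using dim_image Nabla_disjoint_iff by (auto simp: og_Dn_def og_layer_def subset_iff) blast+

lemma hasse_image: "(y, x) \<in> og_hasse P \<Longrightarrow> (f y, f x) \<in> og_hasse Q"
  using Delta_image image_elts by (auto simp: og_hasse_def)

lemma flow_image:
  assumes "(x, y) \<in> og_flow P k"
  shows "(f x, f y) \<in> og_flow Q k"
proof -
  have Dk: "og_Dk Q a k (f x) = f ` og_Dk P a k x" if "x \<in> og_elts P" for a x
    unfolding og_Dk_def cl_singleton_image[OF that, symmetric] by (rule Dn_image[OF P.cl_subset_elts])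
  show ?thesis using assms Dk image_elts dim_image by (auto simp: og_flow_def)
qed

lemma signed_hasse_path_image:
  assumes "(x, y) \<in> (signed_hasse P a)\<^sup>*"
  shows "(f x, f y) \<in> (signed_hasse Q a)\<^sup>*"
  using assms rtrancl_map[of x y "signed_hasse P a" f "signed_hasse Q a"] hasse_image
  by (auto simp: signed_hasse_def)

lemma hasse_connects_bdry_image:
  assumes x: "x \<in> og_elts P" and h: "hasse_connects_bdry P x"
  shows "hasse_connects_bdry Q (f x)"
  unfolding hasse_connects_bdry_def
proof (intro allI ballI impI)
  fix a z' assume z': "z' \<in> og_cl Q {f x}" "og_Nabla Q (\<not> a) z' \<inter> og_cl Q {f x} = {}"
  then obtain z where z: "z \<in> og_cl P {x}" "z' = f z"
    using cl_singleton_image[OF x] by blast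
  have "og_Nabla P (\<not> a) z \<inter> og_cl P {x} = {}"
    using z' z Nabla_disjoint_iff[OF _ P.cl_subset_elts] P.cl_subset_elts cl_singleton_image[OF x]
    by blast
  then have "(x, z) \<in> (signed_hasse P a)\<^sup>*" using hasse_connects_bdryD[OF h z(1)] by blast
  then show "(f x, z') \<in> (signed_hasse Q a)\<^sup>*" using z signed_hasse_path_image by blast
qed

lemma bdry_complete_image:
  assumes S: "S \<subseteq> og_elts P" and c: "bdry_complete P a S"
  shows "bdry_complete Q a (f ` S)"
  unfolding bdry_complete_def
proof (intro ballI impI)
  fix z' assume "z' \<in> f ` S" and z': "og_dim Q z' < og_setdim Q (f ` S) \<and> og_Nabla Q (\<not> a) z' \<inter> f ` S = {}"
  then obtain z where z: "z \<in> S" "z' = f z" by blast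
  then have "z \<in> og_bd P a S"
    using c z' S dim_image setdim_image[OF S] Nabla_disjoint_iff[OF _ S]
    unfolding bdry_complete_def by (metis subsetD)
  then show "z' \<in> og_bd Q a (f ` S)" using z bd_image[OF S] by blast
qed

end

lemma og_iso_incl: "og_iso P Q f \<Longrightarrow> og_incl P Q f"
  by unfold_locales (simp_all add: og_iso_def og_inclusion_def bij_betw_def)

lemma (in ogposet) round_below_top_dim:
  assumes round: "og_round P (og_elts P)" and x: "x \<in> og_elts P"
  shows "\<exists>m\<in>og_elts P. (x, m) \<in> og_ord P \<and> og_dim P m = og_setdim P (og_elts P)"
proof -
  obtain m where m: "m \<in> og_max P (og_elts P)" "(x, m) \<in> og_ord P"
    using ex_max_above[OF x] by blast
  then have me: "m \<in> og_elts P" by (simp add: og_max_def)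
  have "\<not> og_dim P m < og_setdim P (og_elts P)"
  proof
    assume lt: "og_dim P m < og_setdim P (og_elts P)"
    have "bdry_generator P b (og_dim P m) (og_elts P) m" for b
      using m max_Nabla_disjoint[OF m(1)] by (simp add: bdry_generator_def og_max_def)
    then have "m \<in> og_bdry P b (og_dim P m) (og_elts P)" for b
      using me ord_refl[OF me] by (auto simp: mem_bdry_iff[OF dim_nonneg[OF me]])
    then have "m \<in> og_bdry2 P (og_dim P m - 1) (og_elts P)"
      using round lt unfolding og_round_def by blast
    then show False using bdry_dim_le unfolding og_bdry2_def by fastforce
  qed
  then show ?thesis using m me dim_le_setdim[of "og_elts P" m] by force
qed

definition regmol_inv :: "'a ogp \<Rightarrow> bool" where
  "regmol_inv P \<longleftrightarrow> ogpos P \<and> og_elts P \<noteq> {} \<and> (\<forall>a. bdry_complete P a (og_elts P))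
     \<and> (\<forall>x\<in>og_elts P. hasse_connects_bdry P x)"

lemma regmol_inv_point:
  assumes og: "ogpos P" and card: "card (og_elts P) = 1"
  shows "regmol_inv P"
proof -
  interpret ogposet P using og by (rule ogposet.intro)
  obtain p where p: "og_elts P = {p}" using card card_1_singletonE by blast
  then have "og_cl P {p} = {p}" using cl_subset_elts ord_refl mem_cl_singleton by auto
  then show ?thesis using og p
    by (auto simp: regmol_inv_def bdry_complete_def og_setdim_def hasse_connects_bdry_def)
qed

lemma regmol_inv_iso:
  assumes inv: "regmol_inv P" and iso: "og_iso P Q f"
  shows "regmol_inv Q"
proof -
  interpret og_incl P Q f using iso by (rule og_iso_incl)
  have elts: "og_elts Q = f ` og_elts P" using iso by (simp add: og_iso_def bij_betw_def)
  show ?thesis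
    using inv Q.ogpos bdry_complete_image[of "og_elts P"] hasse_connects_bdry_image
    unfolding regmol_inv_def elts by auto
qed

text \<open>The shape of \<open>U \<Rightarrow> V\<close>: \<open>side False\<close> and \<open>side True\<close> are the copies of \<open>U\<close> and \<open>V\<close>,
  and \<open>t\<close> is the new top element.\<close>

locale rewrite_shape = ogposet Q for Q :: "'a ogp" +
  fixes side :: "bool \<Rightarrow> 'a set" and t :: 'a and n :: int
  assumes side_closed: "og_closed Q (side a)"
    and top_elt: "t \<in> og_elts Q" and top_not_side: "t \<notin> side a"
    and elts_eq: "og_elts Q = side False \<union> side True \<union> {t}"
    and side_nonempty: "side a \<noteq> {}"
    and side_setdim: "og_setdim Q (side a) = n"
    and side_bd: "og_bd Q b (side False) = og_bd Q b (side True)"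
    and Delta_top: "og_Delta Q a t = og_layer Q (side a) n"
    and side_pure: "x \<in> side a \<Longrightarrow> \<exists>m\<in>side a. (x, m) \<in> og_ord Q \<and> og_dim Q m = n"
    and side_complete: "bdry_complete Q b (side a)"
    and side_hasse: "x \<in> side a \<Longrightarrow> hasse_connects_bdry Q x"
begin

lemma side_subset_elts: "side a \<subseteq> og_elts Q"
  using side_closed closed_subset_elts by blast

lemma mem_opposite_side: "z \<in> og_elts Q \<Longrightarrow> z \<noteq> t \<Longrightarrow> z \<notin> side a \<Longrightarrow> z \<in> side (\<not> a)"
  using elts_eq by (cases a) auto

lemma side_bd_eq: "og_bd Q b (side c) = og_bd Q b (side d)"
  using side_bd by (cases c; cases d) simp_all

lemma top_face: "m \<in> side a \<Longrightarrow> og_dim Q m = n \<Longrightarrow> m \<in> og_Delta Q a t"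
  using Delta_top by (simp add: og_layer_def)

lemma dim_top: "og_dim Q t = n + 1"
proof -
  obtain m where "m \<in> side False" "og_dim Q m = n"
    using setdim_attained[OF side_subset_elts side_nonempty[of False]] side_setdim[of False] by auto
  then show ?thesis using top_face dim_covers by (force simp: og_Delta_def)
qed

lemma below_top:
  assumes x: "x \<in> og_elts Q"
  shows "(x, t) \<in> og_ord Q"
proof (cases "x = t")
  case False
  then obtain a where "x \<in> side a" using x elts_eq by blast
  then obtain m where m: "m \<in> side a" "(x, m) \<in> og_ord Q" "og_dim Q m = n"
    using side_pure by blast
  then have "og_lt Q m t" using top_face covers_imp_lt by (simp add: og_Delta_def)
  then show ?thesis using m(2) ord_trans by (simp add: og_lt_def)
qed (simp add: top_elt ord_refl)

lemma cl_top: "og_cl Q {t} = og_elts Q"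
  using below_top mem_cl_singleton cl_subset_elts by blast

lemma setdim_elts: "og_setdim Q (og_elts Q) = n + 1"
proof (rule antisym)
  obtain x where "x \<in> og_elts Q" "og_dim Q x = og_setdim Q (og_elts Q)"
    using setdim_attained[of "og_elts Q"] top_elt by blast
  then show "og_setdim Q (og_elts Q) \<le> n + 1" using below_top dim_mono dim_top by fastforce
qed (use dim_le_setdim[OF _ top_elt] dim_top in simp)

lemma top_dim_Nabla_empty:
  assumes m: "m \<in> side a" "og_dim Q m = n"
  shows "og_Nabla Q (\<not> a) m = {}"
proof -
  have "w = t" if "og_covers Q w m" for w
  proof -
    have "og_dim Q w = n + 1" using dim_covers[OF that] m by simp
    moreover have "w \<in> og_elts Q" using that covers_imp_lt lt_in_elts by blast
    ultimately show ?thesis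
      using elts_eq dim_le_setdim[OF side_subset_elts] side_setdim by fastforce
  qed
  then show ?thesis using top_face[OF m] by (auto simp: og_Nabla_def og_Delta_def)
qed

text \<open>An element other than \<open>t\<close> lacking \<open>\<not> a\<close>-cofaces, if it were on the opposite side,
  would lie in the shared boundary \<open>\<partial>\<^sup>a\<close> by completeness, hence on side \<open>a\<close> after all.\<close>

lemma coface_free_in_side:
  assumes z: "z \<in> og_elts Q" "z \<noteq> t" and free: "og_Nabla Q (\<not> a) z \<inter> og_elts Q = {}"
  shows "z \<in> side a"
proof (rule ccontr)
  assume "z \<notin> side a"
  then have opp: "z \<in> side (\<not> a)" using mem_opposite_side z by blast
  have "og_dim Q z \<noteq> n"
  proof
    assume "og_dim Q z = n"
    then have "t \<in> og_Nabla Q (\<not> a) z" using top_face[OF opp] by (simp add: og_Nabla_def og_Delta_def)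
    then show False using free top_elt by blast
  qed
  then have "og_dim Q z < og_setdim Q (side (\<not> a))"
    using dim_le_setdim[OF side_subset_elts opp] side_setdim by fastforce
  then have "z \<in> og_bd Q a (side (\<not> a))"
    using side_complete[of a "\<not> a"] opp free side_subset_elts unfolding bdry_complete_def by blast
  then have "z \<in> og_bd Q a (side a)" using side_bd_eq[of a "\<not> a" a] by simp
  then have "z \<in> og_cl Q (side a)" unfolding og_bd_def by (rule subsetD[OF bdry_subset_cl])
  then show False
    using \<open>z \<notin> side a\<close> side_closed by (simp add: og_closed_def)
qed

lemma complete_elts: "bdry_complete Q a (og_elts Q)"
  unfolding bdry_complete_def og_bd_def setdim_elts
proof (intro ballI impI)
  fix z assume z: "z \<in> og_elts Q" and c: "og_dim Q z < n + 1 \<and> og_Nabla Q (\<not> a) z \<inter> og_elts Q = {}"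
  then have "z \<in> side a" using coface_free_in_side dim_top by force
  then obtain m where m: "m \<in> side a" "(z, m) \<in> og_ord Q" "og_dim Q m = n"
    using side_pure by blast
  then have "bdry_generator Q a n (og_elts Q) m"
    using top_dim_Nabla_empty[OF m(1,3)] m side_subset_elts[of a] by (auto simp: bdry_generator_def)
  moreover have "n \<ge> 0" using m dim_nonneg side_subset_elts[of a] by force
  ultimately show "z \<in> og_bdry Q a (n + 1 - 1) (og_elts Q)"
    using z m(2) by (auto simp: mem_bdry_iff)
qed

lemma hasse_top: "hasse_connects_bdry Q t"
  unfolding hasse_connects_bdry_def cl_top
proof (intro allI ballI impI)
  fix a z assume z: "z \<in> og_elts Q" and free: "og_Nabla Q (\<not> a) z \<inter> og_elts Q = {}"
  show "(t, z) \<in> (signed_hasse Q a)\<^sup>*"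
  proof (cases "z = t")
    case False
    then obtain m where m: "m \<in> side a" "(z, m) \<in> og_ord Q" "og_dim Q m = n"
      using coface_free_in_side[OF z False free] side_pure by blast
    have "z \<in> og_cl Q {m}" using m(2) by (simp add: mem_cl_singleton)
    moreover have "og_Nabla Q (\<not> a) z \<inter> og_cl Q {m} = {}" using free cl_subset_elts by blast
    ultimately have "(m, z) \<in> (signed_hasse Q a)\<^sup>*"
      using hasse_connects_bdryD[OF side_hasse[OF m(1)]] by blast
    with Delta_signed_hasse[OF top_elt top_face[OF m(1,3)]] show ?thesis
      by (rule converse_rtrancl_into_rtrancl)
  qed simp
qed

lemma regmol_inv: "regmol_inv Q"
  using ogpos top_elt complete_elts hasse_top side_hasse elts_eq
  unfolding regmol_inv_def by blast

end

lemma regmol_inv_rewrite: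
  assumes inv: "regmol_inv U" "regmol_inv V" and round: "og_round U (og_elts U)" "og_round V (og_elts V)"
    and rw: "og_rewrite_via U V W i j t"
  shows "regmol_inv W"
proof -
  have og: "ogpos U" "ogpos V" "ogpos W" using rw by (auto simp: og_rewrite_via_def)
  interpret U: og_incl U W i
    using rw og by (simp add: og_rewrite_via_def og_incl_def og_incl_axioms_def ogposet_def)
  interpret V: og_incl V W j
    using rw og by (simp add: og_rewrite_via_def og_incl_def og_incl_axioms_def ogposet_def)
  let ?side = "\<lambda>a. if a then j ` og_elts V else i ` og_elts U"
  let ?n = "og_setdim U (og_elts U)"
  have dims: "og_setdim V (og_elts V) = ?n" using rw by (simp add: og_rewrite_via_def)
  have pure_U: "\<exists>m\<in>i ` og_elts U. (x, m) \<in> og_ord W \<and> og_dim W m = ?n" if "x \<in> i ` og_elts U" for x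
    using that U.P.round_below_top_dim[OF round(1)] U.ord_iff U.dim_image by fastforce
  have pure_V: "\<exists>m\<in>j ` og_elts V. (x, m) \<in> og_ord W \<and> og_dim W m = ?n" if "x \<in> j ` og_elts V" for x
    using that V.P.round_below_top_dim[OF round(2)] V.ord_iff V.dim_image dims by fastforce
  have "rewrite_shape W ?side t ?n"
  proof (unfold_locales)
    fix a b x
    show "og_closed W (?side a)" using U.closed_image V.closed_image by simp
    show "t \<notin> ?side a" using rw by (simp add: og_rewrite_via_def)
    show "?side a \<noteq> {}" using inv by (simp add: regmol_inv_def)
    show "og_setdim W (?side a) = ?n" using U.setdim_image V.setdim_image dims by simp
    show "og_bd W b (?side False) = og_bd W b (?side True)"
      using rw U.bd_image V.bd_image by (simp add: og_rewrite_via_def)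
    show "og_Delta W a t = og_layer W (?side a) ?n"
      using rw U.layer_image V.layer_image dims by (simp add: og_rewrite_via_def)
    show "x \<in> ?side a \<Longrightarrow> \<exists>m\<in>?side a. (x, m) \<in> og_ord W \<and> og_dim W m = ?n"
      using pure_U pure_V by (cases a) simp_all
    show "bdry_complete W b (?side a)"
      using inv U.bdry_complete_image V.bdry_complete_image by (simp add: regmol_inv_def)
    show "x \<in> ?side a \<Longrightarrow> hasse_connects_bdry W x"
      using inv U.hasse_connects_bdry_image V.hasse_connects_bdry_image
      by (cases a) (auto simp: regmol_inv_def)
  qed (use rw in \<open>auto simp: og_rewrite_via_def\<close>)
  then show ?thesis by (rule rewrite_shape.regmol_inv)
qed

context ogposet
begin

definition coface_free :: "bool \<Rightarrow> int \<Rightarrow> 'a set" where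
  "coface_free a N = {w \<in> og_elts P. og_dim P w < N \<and> og_Nabla P (\<not> a) w \<inter> og_elts P = {}}"

text \<open>By the hypothesis, a maximal coface-free element above \<open>z\<close> has dimension \<open>N - 1\<close> or is
  maximal, so it generates \<open>\<partial>\<^sup>a\<close>.\<close>

lemma bdry_complete_if_ascending:
  assumes N: "N = og_setdim P (og_elts P)"
    and ascend: "\<And>w. w \<in> coface_free a N \<Longrightarrow> og_dim P w \<noteq> N - 1 \<Longrightarrow> w \<notin> og_max P (og_elts P)
      \<Longrightarrow> \<exists>u\<in>coface_free a N. og_lt P w u"
  shows "bdry_complete P a (og_elts P)"
  unfolding bdry_complete_def og_bd_def N[symmetric]
proof (intro ballI impI)
  fix z assume z: "z \<in> og_elts P" "og_dim P z < N \<and> og_Nabla P (\<not> a) z \<inter> og_elts P = {}"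
  let ?A = "{w \<in> coface_free a N. (z, w) \<in> og_ord P}"
  have "z \<in> ?A" using z ord_refl by (auto simp: coface_free_def)
  then obtain w where w: "w \<in> ?A" "\<forall>u\<in>?A. \<not> og_lt P w u"
    using ex_maximal[of ?A] by (auto simp: coface_free_def)
  have "og_dim P w = N - 1 \<or> w \<in> og_max P (og_elts P)"
  proof (rule ccontr)
    assume "\<not> ?thesis"
    then obtain u where "u \<in> coface_free a N" "og_lt P w u" using ascend w(1) by blast
    then show False using w ord_trans by (auto simp: og_lt_def)
  qed
  then have "bdry_generator P a (N - 1) (og_elts P) w"
    using w(1) by (auto simp: bdry_generator_def coface_free_def)
  moreover have "N - 1 \<ge> 0" using w(1) dim_nonneg by (force simp: coface_free_def)
  ultimately show "z \<in> og_bdry P a (N - 1) (og_elts P)"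
    using z w(1) by (auto simp: mem_bdry_iff)
qed

lemma max_of_side_max:
  "og_closed P Y \<Longrightarrow> og_elts P = X \<union> Y \<Longrightarrow> u \<in> og_max P X \<Longrightarrow> u \<notin> Y \<Longrightarrow> u \<in> og_max P (og_elts P)"
  using closed_downward by (auto simp: og_max_def og_lt_def)

lemma Nabla_of_side_disjoint:
  assumes "og_closed P Y" "og_elts P = X \<union> Y" "y \<notin> Y" "og_Nabla P b y \<inter> X = {}"
  shows "og_Nabla P b y \<inter> og_elts P = {}"
  using assms closed_downward covers_imp_lt by (fastforce simp: og_Nabla_def og_lt_def)

lemma generator_of_side_coface_free:
  assumes Y: "og_closed P Y" and el: "og_elts P = X \<union> Y" and y: "y \<notin> Y"
    and N: "og_setdim P X \<le> N" and gen: "bdry_generator P a (og_setdim P X - 1) X y"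
  shows "y \<in> coface_free a N"
proof -
  have "y \<in> og_elts P" "og_dim P y < N" using gen el N by (auto simp: bdry_generator_def)
  moreover have "og_Nabla P (\<not> a) y \<inter> og_elts P = {}"
    using gen Nabla_of_side_disjoint[OF Y el y] max_Nabla_disjoint[OF max_of_side_max[OF Y el _ y]]
    unfolding bdry_generator_def by blast
  ultimately show ?thesis by (simp add: coface_free_def)
qed

lemma ascend_to_max_of_side:
  assumes Y: "og_closed P Y" and el: "og_elts P = X \<union> Y"
    and w: "w \<in> X" "w \<notin> og_max P X" and N: "og_setdim P X < N"
    and shared: "\<And>u. u \<in> X \<Longrightarrow> u \<in> Y \<Longrightarrow> (w, u) \<in> og_ord P \<Longrightarrow> u = w"
  shows "\<exists>u\<in>coface_free a N. og_lt P w u"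
proof -
  have X: "X \<subseteq> og_elts P" using el by blast
  obtain u where u: "u \<in> og_max P X" "(w, u) \<in> og_ord P" using ex_max_above[OF w(1) X] by blast
  then have "u \<noteq> w" "u \<in> X" using w by (auto simp: og_max_def)
  then have "u \<notin> Y" using shared u by blast
  then have "u \<in> og_max P (og_elts P)" using max_of_side_max[OF Y el u(1)] by blast
  moreover have "og_dim P u < N" using dim_le_setdim[OF X \<open>u \<in> X\<close>] N by simp
  ultimately have "u \<in> coface_free a N"
    using max_Nabla_disjoint by (auto simp: coface_free_def og_max_def)
  then show ?thesis using u \<open>u \<noteq> w\<close> by (auto simp: og_lt_def)
qed

lemma ascend_in_side:
  assumes Y: "og_closed P Y" and el: "og_elts P = X \<union> Y"
    and complete: "bdry_complete P a X" and N: "N = og_setdim P (og_elts P)"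
    and w: "w \<in> coface_free a N" "og_dim P w \<noteq> N - 1" "w \<notin> og_max P (og_elts P)" "w \<in> X" "w \<notin> Y"
  shows "\<exists>u\<in>coface_free a N. og_lt P w u"
proof -
  have Xe: "X \<subseteq> og_elts P" using el by blast
  have wX: "w \<notin> og_max P X" using max_of_side_max[OF Y el] w by blast
  then have dim_w: "og_dim P w < og_setdim P X"
    using max_if_dim_eq_setdim[OF Xe w(4)] dim_le_setdim[OF Xe w(4)] by linarith
  have NX: "og_setdim P X \<le> N" using setdim_mono[OF Xe order_refl] w(4) N by blast
  have "og_Nabla P (\<not> a) w \<inter> X = {}" using w(1) Xe by (auto simp: coface_free_def)
  then have "w \<in> og_bd P a X" using complete w(4) dim_w unfolding bdry_complete_def by blast
  moreover have "og_setdim P X - 1 \<ge> 0" using dim_w dim_nonneg[of w] Xe w(4) by force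
  ultimately obtain y where y: "(w, y) \<in> og_ord P" "bdry_generator P a (og_setdim P X - 1) X y"
    unfolding og_bd_def by (auto simp: mem_bdry_iff)
  have "y \<notin> Y" using y(1) w(5) closed_downward[OF Y] by blast
  show ?thesis
  proof (cases "y = w")
    case True
    then have "og_dim P w = og_setdim P X - 1" using y(2) wX by (auto simp: bdry_generator_def)
    then have "og_setdim P X < N" using w(2) NX by simp
    moreover have "u = w" if "u \<in> Y" "(w, u) \<in> og_ord P" for u
      using that w(5) closed_downward[OF Y] by blast
    ultimately show ?thesis using ascend_to_max_of_side[OF Y el w(4) wX] by blast
  next
    case False
    then show ?thesis
      using generator_of_side_coface_free[OF Y el \<open>y \<notin> Y\<close> NX y(2)] y(1) by (auto simp: og_lt_def)
  qed
qed

end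

text \<open>The shape of \<open>I #\<^sub>k J\<close> as seen from the sign \<open>a\<close>: only \<open>I \<inter> J = \<partial>\<^sup>a\<^sub>k I\<close> is used, so
  \<open>U #\<^sub>k V\<close> is an instance both for \<open>a = True\<close>, \<open>(I, J) = (U, V)\<close>, and for \<open>a = False\<close>,
  \<open>(I, J) = (V, U)\<close>.\<close>

locale paste_shape = ogposet Q for Q :: "'a ogp" +
  fixes I J :: "'a set" and k :: int and a :: bool
  assumes closed_I: "og_closed Q I" and closed_J: "og_closed Q J"
    and elts_eq: "og_elts Q = I \<union> J"
    and k_nonneg: "k \<ge> 0"
    and shared_eq: "I \<inter> J = og_bdry Q a k I"
    and k_lt_I: "k < og_setdim Q I" and k_lt_J: "k < og_setdim Q J"
    and complete_I: "bdry_complete Q a I" and complete_J: "bdry_complete Q a J"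
begin

abbreviation N :: int where "N \<equiv> og_setdim Q (og_elts Q)"

lemma I_subset: "I \<subseteq> og_elts Q" and J_subset: "J \<subseteq> og_elts Q"
  using elts_eq by blast+

lemma I_nonempty: "I \<noteq> {}" and J_nonempty: "J \<noteq> {}"
  using k_lt_I k_lt_J k_nonneg by (auto simp: og_setdim_def)

lemma setdim_I_le: "og_setdim Q I \<le> N"
  using setdim_mono[OF I_subset order_refl I_nonempty] .

lemma setdim_J_le: "og_setdim Q J \<le> N"
  using setdim_mono[OF J_subset order_refl J_nonempty] .

lemma shared_dim_le: "y \<in> I \<inter> J \<Longrightarrow> og_dim Q y \<le> k"
  using shared_eq bdry_dim_le by blast

lemma shared_above_eq:
  assumes "u \<in> I \<inter> J" "(w, u) \<in> og_ord Q" "k \<le> og_dim Q w"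
  shows "u = w"
  using assms dim_mono[OF assms(2)] shared_dim_le[OF assms(1)] ord_dim_eq_imp_eq[OF assms(2)]
  by simp

lemma shared_generator:
  assumes "y \<in> I \<inter> J"
  obtains c where "(y, c) \<in> og_ord Q" "c \<in> I \<inter> J" "bdry_generator Q a k I c"
proof -
  obtain c where c: "(y, c) \<in> og_ord Q" "bdry_generator Q a k I c"
    using assms shared_eq k_nonneg by (auto simp: mem_bdry_iff)
  then have "c \<in> og_bdry Q a k I"
    using k_nonneg I_subset ord_refl by (auto simp: mem_bdry_iff bdry_generator_def)
  then show ?thesis using that c shared_eq by blast
qed

lemma shared_coface_free:
  assumes y: "y \<in> I \<inter> J" and top: "og_dim Q y = k \<and> og_Nabla Q (\<not> a) y \<inter> J = {} \<or> y \<in> og_max Q J"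
  shows "y \<in> coface_free a N"
proof -
  obtain c where c: "(y, c) \<in> og_ord Q" "c \<in> I \<inter> J" "bdry_generator Q a k I c"
    using shared_generator[OF y] .
  have "og_dim Q c \<le> k" using shared_dim_le[OF c(2)] .
  have "og_Nabla Q (\<not> a) y \<inter> og_elts Q = {}"
  proof (cases "og_dim Q y = k")
    case True
    then have "og_dim Q y = og_dim Q c" using dim_mono[OF c(1)] \<open>og_dim Q c \<le> k\<close> by simp
    then have "c = y" using ord_dim_eq_imp_eq[OF c(1)] by simp
    then have "og_Nabla Q (\<not> a) y \<inter> I = {}" using c(3) True by (auto simp: bdry_generator_def)
    moreover have "og_Nabla Q (\<not> a) y \<inter> J = {}" using top True max_Nabla_disjoint by blast
    ultimately show ?thesis using elts_eq by blast
  next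
    case False
    then have "y \<in> og_max Q J" using top by blast
    then have "c = y" using c(1,2) by (auto simp: og_max_def og_lt_def)
    then have "y \<in> og_max Q I" using c(3) False shared_dim_le[OF y] by (auto simp: bdry_generator_def)
    then show ?thesis using \<open>y \<in> og_max Q J\<close> max_Nabla_disjoint elts_eq by blast
  qed
  moreover have "og_dim Q y < N" using shared_dim_le[OF y] k_lt_J setdim_J_le by simp
  ultimately show ?thesis using y I_subset by (auto simp: coface_free_def)
qed

lemma ascend_shared_nonmax:
  assumes w: "w \<in> coface_free a N" "og_dim Q w \<noteq> N - 1" "w \<in> I \<inter> J" "w \<notin> og_max Q J"
  shows "\<exists>u\<in>coface_free a N. og_lt Q w u"
proof -
  have dim_w: "og_dim Q w < og_setdim Q J" using shared_dim_le[OF w(3)] k_lt_J by simp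
  have "og_Nabla Q (\<not> a) w \<inter> J = {}" using w(1) J_subset by (auto simp: coface_free_def)
  then have "w \<in> og_bd Q a J" using complete_J w(3) dim_w unfolding bdry_complete_def by blast
  moreover have "og_setdim Q J - 1 \<ge> 0" using k_lt_J k_nonneg by simp
  ultimately obtain y where y: "(w, y) \<in> og_ord Q" "bdry_generator Q a (og_setdim Q J - 1) J y"
    unfolding og_bd_def by (auto simp: mem_bdry_iff)
  have el: "og_elts Q = J \<union> I" using elts_eq by blast
  show ?thesis
  proof (cases "y \<in> I")
    case False
    then have "y \<noteq> w" using w(3) by blast
    then show ?thesis
      using generator_of_side_coface_free[OF closed_I el False setdim_J_le y(2)] y(1)
      by (auto simp: og_lt_def)
  next
    case True
    then have yIJ: "y \<in> I \<inter> J" using y(2) by (simp add: bdry_generator_def)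
    have "og_dim Q y \<le> k" using shared_dim_le[OF yIJ] .
    moreover have "og_dim Q y = og_setdim Q J - 1 \<and> og_Nabla Q (\<not> a) y \<inter> J = {} \<or> y \<in> og_max Q J"
      using y(2) by (auto simp: bdry_generator_def)
    ultimately have top: "og_dim Q y = k \<and> og_Nabla Q (\<not> a) y \<inter> J = {} \<or> y \<in> og_max Q J"
      using k_lt_J by (elim disjE) auto
    show ?thesis
    proof (cases "y = w")
      case True
      then have dim_w: "og_dim Q w = og_setdim Q J - 1"
        using y(2) w(4) by (auto simp: bdry_generator_def)
      then have "og_setdim Q J < N" using w(2) setdim_J_le by simp
      moreover have "k \<le> og_dim Q w" using dim_w k_lt_J by simp
      ultimately show ?thesis
        using ascend_to_max_of_side[OF closed_I el _ w(4)] shared_above_eq w(3) by blast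
    next
      case False
      then show ?thesis using shared_coface_free[OF yIJ top] y(1) by (auto simp: og_lt_def)
    qed
  qed
qed

lemma ascend_shared_max:
  assumes w: "w \<in> coface_free a N" "og_dim Q w \<noteq> N - 1" "w \<notin> og_max Q (og_elts Q)"
    "w \<in> I" "w \<in> og_max Q J"
  shows "\<exists>u\<in>coface_free a N. og_lt Q w u"
proof -
  have wJ: "w \<in> J" using w(5) by (simp add: og_max_def)
  have wI: "w \<notin> og_max Q I" using w(3,5) elts_eq by (auto simp: og_max_def)
  have dim_w: "og_dim Q w < og_setdim Q I" using shared_dim_le w(4) wJ k_lt_I by fastforce
  have "og_Nabla Q (\<not> a) w \<inter> I = {}" using w(1) I_subset by (auto simp: coface_free_def)
  then have "w \<in> og_bd Q a I" using complete_I w(4) dim_w unfolding bdry_complete_def by blast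
  moreover have "og_setdim Q I - 1 \<ge> 0" using k_lt_I k_nonneg by simp
  ultimately obtain y where y: "(w, y) \<in> og_ord Q" "bdry_generator Q a (og_setdim Q I - 1) I y"
    unfolding og_bd_def by (auto simp: mem_bdry_iff)
  have max_J: "u = w" if "u \<in> J" "(w, u) \<in> og_ord Q" for u
    using that w(5) by (auto simp: og_max_def og_lt_def)
  show ?thesis
  proof (cases "y \<in> J")
    case True
    then have "og_dim Q w = og_setdim Q I - 1"
      using y max_J wI by (auto simp: bdry_generator_def)
    then have "og_setdim Q I < N" using w(2) setdim_I_le by simp
    then show ?thesis using ascend_to_max_of_side[OF closed_J elts_eq w(4) wI] max_J by blast
  next
    case False
    then have "y \<noteq> w" using wJ by blast
    then show ?thesis
      using generator_of_side_coface_free[OF closed_J elts_eq False setdim_I_le y(2)] y(1)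
      by (auto simp: og_lt_def)
  qed
qed

lemma complete_elts: "bdry_complete Q a (og_elts Q)"
proof (rule bdry_complete_if_ascending[OF refl])
  fix w assume w: "w \<in> coface_free a N" "og_dim Q w \<noteq> N - 1" "w \<notin> og_max Q (og_elts Q)"
  have el: "og_elts Q = J \<union> I" using elts_eq by blast
  consider "w \<in> I" "w \<notin> J" | "w \<in> J" "w \<notin> I" | "w \<in> I \<inter> J"
    using w(1) elts_eq by (auto simp: coface_free_def)
  then show "\<exists>u\<in>coface_free a N. og_lt Q w u"
  proof cases
    case 1
    then show ?thesis using ascend_in_side[OF closed_J elts_eq complete_I refl w] by blast
  next
    case 2
    then show ?thesis using ascend_in_side[OF closed_I el complete_J refl w] by blast
  next
    case 3
    show ?thesis
    proof (cases "w \<in> og_max Q J")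
      case True
      then show ?thesis using ascend_shared_max[OF w] 3 by blast
    next
      case False
      then show ?thesis using ascend_shared_nonmax[OF w(1,2) 3] by blast
    qed
  qed
qed

end

lemma regmol_inv_paste:
  assumes inv: "regmol_inv U" "regmol_inv V"
    and k: "int k < og_setdim U (og_elts U)" "int k < og_setdim V (og_elts V)"
    and paste: "og_paste_via k U V W i j"
  shows "regmol_inv W"
proof -
  have og: "ogpos U" "ogpos V" "ogpos W" using paste by (auto simp: og_paste_via_def)
  interpret U: og_incl U W i
    using paste og by (simp add: og_paste_via_def og_incl_def og_incl_axioms_def ogposet_def)
  interpret V: og_incl V W j
    using paste og by (simp add: og_paste_via_def og_incl_def og_incl_axioms_def ogposet_def)
  let ?I = "i ` og_elts U" and ?J = "j ` og_elts V"
  have el: "og_elts W = ?I \<union> ?J" and el': "og_elts W = ?J \<union> ?I"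
    using paste by (auto simp: og_paste_via_def)
  have "?I \<inter> ?J = i ` og_bdry U True (int k) (og_elts U)"
    "?I \<inter> ?J = j ` og_bdry V False (int k) (og_elts V)"
    using paste by (simp_all add: og_paste_via_def)
  then have shared: "?I \<inter> ?J = og_bdry W True (int k) ?I" "?J \<inter> ?I = og_bdry W False (int k) ?J"
    using U.bdry_image[OF subset_refl] V.bdry_image[OF subset_refl] by (simp_all add: Int_commute)
  have dims: "int k < og_setdim W ?I" "int k < og_setdim W ?J"
    using k U.setdim_image V.setdim_image by simp_all
  have complete: "bdry_complete W a ?I" "bdry_complete W a ?J" for a
    using inv U.bdry_complete_image V.bdry_complete_image by (auto simp: regmol_inv_def)
  interpret out: paste_shape W ?I ?J "int k" True
    by unfold_locales (use U.closed_image V.closed_image el shared dims complete in auto)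
  interpret inp: paste_shape W ?J ?I "int k" False
    by unfold_locales (use U.closed_image V.closed_image el' shared dims complete in auto)
  have "bdry_complete W a (og_elts W)" for a
    using out.complete_elts inp.complete_elts by (cases a) simp_all
  moreover have "hasse_connects_bdry W x" if "x \<in> og_elts W" for x
    using that el inv U.hasse_connects_bdry_image V.hasse_connects_bdry_image
    by (auto simp: regmol_inv_def)
  ultimately show ?thesis using og(3) el inv by (auto simp: regmol_inv_def)
qed

lemma regmol_imp_inv: "regmol P \<Longrightarrow> regmol_inv P"
proof (induction rule: regmol.induct)
  case (point P)
  then show ?case by (rule regmol_inv_point)
next
  case (iso P Q f)
  then show ?case using regmol_inv_iso by blast
next
  case (paste U V k W i j)
  then show ?case by (intro regmol_inv_paste[of U V k W i j])
next
  case (rewrite U V W i j t)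
  then show ?case by (intro regmol_inv_rewrite[of U V W i j t])
qed

lemma og_inclusion_comp:
  assumes f: "og_inclusion A B f" and g: "og_inclusion B C g"
  shows "og_inclusion A C (g \<circ> f)"
proof -
  have fA: "f ` og_elts A \<subseteq> og_elts B" using f by (simp add: og_inclusion_def og_map_def)
  have "(g \<circ> f) ` og_bdry A a n (og_cl A {x}) = og_bdry C a n (og_cl C {g (f x)})"
    if x: "x \<in> og_elts A" for x a n
  proof -
    have "f x \<in> og_elts B" using fA x by blast
    then have "g ` og_bdry B a n (og_cl B {f x}) = og_bdry C a n (og_cl C {g (f x)})"
      using g by (simp add: og_inclusion_def og_map_def)
    moreover have "f ` og_bdry A a n (og_cl A {x}) = og_bdry B a n (og_cl B {f x})"
      using f x by (simp add: og_inclusion_def og_map_def)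
    moreover have "(g \<circ> f) ` og_bdry A a n (og_cl A {x}) = g ` f ` og_bdry A a n (og_cl A {x})"
      by (rule image_comp[symmetric])
    ultimately show ?thesis by simp
  qed
  moreover have "inj_on (g \<circ> f) (og_elts A)"
    using f g fA by (auto simp: og_inclusion_def intro: comp_inj_on inj_on_subset)
  moreover have "(g \<circ> f) ` og_elts A \<subseteq> og_elts C"
    using fA g by (force simp: og_inclusion_def og_map_def)
  ultimately show ?thesis by (simp add: og_inclusion_def og_map_def)
qed

lemma subincl_imp_inclusion: "subincl f A B \<Longrightarrow> regmol A \<and> regmol B \<and> og_inclusion A B f"
proof (induction rule: subincl.induct)
  case (iso A B f)
  then show ?case by (auto simp: og_iso_def og_inclusion_def bij_betw_def)
next
  case (pasteL U V W k i j)
  then show ?case by (simp add: og_paste_via_def)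
next
  case (pasteR U V W k i j)
  then show ?case by (simp add: og_paste_via_def)
next
  case (comp f A B g C)
  then show ?case using og_inclusion_comp by blast
qed

lemma (in ogposet) acyclic_flow_if_dimwise_acyclic:
  assumes "og_dimwise_acyclic P"
  shows "acyclic (og_flow P k)"
proof (cases "k \<ge> 0")
  case True
  then show ?thesis using assms nonneg_int_cases[OF True] by (auto simp: og_dimwise_acyclic_def)
next
  case False
  then have "og_flow P k = {}"
    using dim_nonneg cl_subset_elts by (fastforce simp: og_flow_def og_Dk_def og_Dn_def og_layer_def)
  then show ?thesis by (simp add: acyclic_def)
qed

lemma regmol_acyclic_imp_dimwise_acyclic:
  assumes "regmol U" "og_acyclic U"
  shows "og_dimwise_acyclic U"
proof -
  have inv: "regmol_inv U" using regmol_imp_inv[OF assms(1)] .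
  then interpret ogposet U by (simp add: regmol_inv_def ogposet_def)
  have "acyclic (og_flow U k)" for k
    using acyclic_if_edges_map_to_paths[of "og_hasse U" "og_flow U k" id] assms(2)
      flow_edge_hasse_path inv by (simp add: og_acyclic_def regmol_inv_def)
  then show ?thesis by (simp add: og_dimwise_acyclic_def)
qed

lemma dimwise_acyclic_imp_frame_acyclic:
  assumes acyc: "og_dimwise_acyclic U"
  shows "og_frame_acyclic U"
  unfolding og_frame_acyclic_def
proof (intro allI impI)
  fix V assume "og_submol V U"
  then obtain g where "subincl g (og_restrict U V) U" by (auto simp: og_submol_def)
  then have R: "regmol (og_restrict U V)" "regmol U" and incl: "og_inclusion (og_restrict U V) U g"
    using subincl_imp_inclusion by blast+
  have "ogpos (og_restrict U V)" "ogpos U"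
    using regmol_imp_inv[OF R(1)] regmol_imp_inv[OF R(2)] by (simp_all add: regmol_inv_def)
  then interpret og_incl "og_restrict U V" U g
    using incl by (simp add: og_incl_def og_incl_axioms_def ogposet_def)
  let ?k = "og_frdim (og_restrict U V)"
  have "(g x, g y) \<in> (og_flow U ?k)\<^sup>+" if "(x, y) \<in> og_flow (og_restrict U V) ?k" for x y
    using flow_image[OF that] by (rule r_into_trancl)
  then have "acyclic (og_flow (og_restrict U V) ?k)"
    by (rule acyclic_if_edges_map_to_paths[OF Q.acyclic_flow_if_dimwise_acyclic[OF acyc]])
  then show "acyclic (og_mflow (og_restrict U V) ?k)"
    unfolding og_mflow_def by (rule acyclic_subset) blast
qed

theorem lemma3p39:
  fixes U :: "'a ogp"
  assumes "regmol U"
  shows "(og_acyclic U \<longrightarrow> og_dimwise_acyclic U) \<and> (og_dimwise_acyclic U \<longrightarrow> og_frame_acyclic U)"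
  using regmol_acyclic_imp_dimwise_acyclic[OF assms] dimwise_acyclic_imp_frame_acyclic by blast

end
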